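(* Let $q$ be an odd positive integer, $p>q$ a prime, and $a\in(\mathbb{Z}/pq\mathbb{Z})^*$ with $a^{(p-1)/2}\equiv-1\pmod{pq}$ and such that $\alpha:=a\bmod p$ generates $\mathbb{F}_p^*$. Let $\beta:=a\bmod q\in(\mathbb{Z}/q\mathbb{Z})^*$ and $n=\mathrm{ord}(\beta)$ (so $n\mid p-1$). Let $\psi:\langle\beta\rangle\to\mu_n$, $\beta^j\mapsto e^{2\pi \mathbf{i} j/n}$, and let $\chi$ be the character of $\mathbb{F}_p^*$ given by $\chi(\alpha^j)=e^{2\pi\mathbf{i} j/n}$. Let $B=\{b\in\langle\beta\rangle : b-1\in\langle\beta\rangle\}$ and, for $1\le i,j\le n-1$, $c_{i,j}=\sum_{b\in B}\psi(b)^{-i}\psi(1-b)^{-j}$. Then, with $S=S_{pq}(a)$, $$|S\cap(S+1)|=\frac{1}{n^2}\Big((p+1)|B|+\sum_{1\le i\le j<n-i}2(2-\delta_{i,j})\,\mathrm{Re}\big(c_{i,j}J(\chi^i,\chi^j)\big)\Big),$$ where $\delta_{i,j}$ is the Kronecker delta.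
   Context: $S_{pq}(a)=\{a^j:0\le j<p-1\}\subseteq\mathbb{Z}/pq\mathbb{Z}$, $S+1=\{s+1:s\in S\}$, $\mu_n$ is the group of complex $n$-th roots of unity. A character mod $p$ is a homomorphism $\chi:\mathbb{F}_p^*\to\mathbb{C}^*$; it is extended to $\mathbb{F}_p$ by $\chi(0)=0$ if $\chi$ is nontrivial and $\chi(0)=1$ if $\chi$ is trivial. For characters $\chi,\lambda$ mod $p$ the Jacobi sum is $J(\chi,\lambda)=\sum_{c,d\in\mathbb{F}_p,\,c+d=1}\chi(c)\lambda(d)$. $\mathbf{i}=\sqrt{-1}$. *)

theory Defs
  imports "HOL-Analysis.Analysis" "HOL-Number_Theory.Number_Theory"
begin

(* Residues mod m are represented by naturals in {0..<m}. *)

definition S_set :: "nat \<Rightarrow> nat \<Rightarrow> nat \<Rightarrow> nat set" where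
  "S_set N p a = {a ^ j mod N | j. j < p - 1}"

definition shift1 :: "nat \<Rightarrow> nat set \<Rightarrow> nat set" where
  "shift1 N S = {(s + 1) mod N | s. s \<in> S}"

definition cyc :: "nat \<Rightarrow> nat \<Rightarrow> nat set" where
  "cyc q a = {a ^ k mod q | k. True}"

definition dlog :: "nat \<Rightarrow> nat \<Rightarrow> nat \<Rightarrow> nat" where
  "dlog m a x = (LEAST k. [a ^ k = x] (mod m))"

definition psi :: "nat \<Rightarrow> nat \<Rightarrow> nat \<Rightarrow> nat \<Rightarrow> complex" where
  "psi q a n b = exp (2 * of_real pi * \<i> * of_nat (dlog q a b) / of_nat n)"

definition Bset :: "nat \<Rightarrow> nat \<Rightarrow> nat set" where
  "Bset q a = {b \<in> cyc q a. (b + q - 1) mod q \<in> cyc q a}"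

definition c_coef :: "nat \<Rightarrow> nat \<Rightarrow> nat \<Rightarrow> nat \<Rightarrow> nat \<Rightarrow> complex" where
  "c_coef q a n i j =
     (\<Sum>b\<in>Bset q a. inverse (psi q a n b) ^ i * inverse (psi q a n ((q + 1 - b) mod q)) ^ j)"

definition chi :: "nat \<Rightarrow> nat \<Rightarrow> nat \<Rightarrow> nat \<Rightarrow> complex" where
  "chi p a n x = exp (2 * of_real pi * \<i> * of_nat (dlog p a x) / of_nat n)"

definition char_ext :: "nat \<Rightarrow> (nat \<Rightarrow> complex) \<Rightarrow> nat \<Rightarrow> complex" where
  "char_ext p f x =
     (if x mod p = 0 then (if (\<forall>y\<in>{1..<p}. f y = 1) then 1 else 0) else f (x mod p))"

definition chi_pow :: "nat \<Rightarrow> nat \<Rightarrow> nat \<Rightarrow> nat \<Rightarrow> nat \<Rightarrow> complex" where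
  "chi_pow p a n i = char_ext p (\<lambda>x. chi p a n x ^ i)"

definition jacobi :: "nat \<Rightarrow> (nat \<Rightarrow> complex) \<Rightarrow> (nat \<Rightarrow> complex) \<Rightarrow> complex" where
  "jacobi p f g = (\<Sum>c\<in>{0..<p}. f c * g ((p + 1 - c) mod p))"

end

theory Submission
  imports Defs
begin

text \<open>Reducing modulo \<open>p\<close>, the elements \<open>s \<in> S\<close> with \<open>s - 1 \<in> S\<close> correspond to the
  \<open>x \<in> \<FF>\<^sub>p - {0, 1}\<close> (\<open>x = s mod p\<close>), and because \<open>a\<^bsup>(p - 1)/2\<^esup> \<equiv> -1 (mod pq)\<close>
  the condition modulo \<open>q\<close> becomes \<open>\<beta>\<^bsup>log x\<^esup> + \<beta>\<^bsup>log (1 - x)\<^esup> = 1\<close>, i.e.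
  \<open>(\<beta>\<^bsup>log x\<^esup>, \<beta>\<^bsup>log (1 - x)\<^esup>) = (b, 1 - b)\<close> for some \<open>b \<in> B\<close>. Detecting both equalities
  with the orthogonality relations of the characters of a cyclic group of order \<open>n\<close> gives
  \<open>n\<^sup>2 |S \<inter> (S + 1)| = \<Sum>\<^sub>i\<^sub>,\<^sub>j\<^sub><\<^sub>n c\<^sub>i\<^sub>,\<^sub>j J'(\<chi>\<^sup>i, \<chi>\<^sup>j)\<close>, where \<open>J'\<close> is the Jacobi sum
  without the terms \<open>c = 0, 1\<close>; it equals \<open>J\<close> for nontrivial characters. The row \<open>i = 0\<close>, the
  column \<open>j = 0\<close> and the antidiagonal \<open>i + j \<equiv> 0\<close> each contribute \<open>|B|(p - 1)\<close>, since they
  count the \<open>x\<close> for which \<open>1 - x\<close>, \<open>x\<close>, resp. \<open>x / (1 - x)\<close> has a prescribed index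
  modulo \<open>n\<close>; the corner \<open>|B|(p - 2)\<close> is thereby counted three times. The remaining terms are
  permuted by \<open>(i, j) \<mapsto> (j, i)\<close> and conjugated by \<open>(i, j) \<mapsto> (n - i, n - j)\<close>, which folds
  them onto the real parts over the triangle \<open>1 \<le> i \<le> j < n - i\<close>.\<close>

section \<open>Sums of roots of unity and reindexing\<close>

lemma sum_powers_root_of_unity:
  fixes z :: complex
  assumes "z ^ n = 1"
  shows "(\<Sum>i<n. z ^ i) = (if z = 1 then of_nat n else 0)"
  using assms by (simp add: sum_gp_strict)

lemma root_of_unity_pow_diff:
  fixes z :: complex
  assumes "z ^ n = 1" "k \<le> n"
  shows "z ^ (n - k) = cnj (z ^ k)"
proof (cases "n = 0")
  case False
  have "norm z ^ n = 1" using assms(1) by (metis norm_one norm_power)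
  hence "norm z = 1" using False by (metis norm_ge_zero one_power2 power_eq_imp_eq_base zero_le_one bot_nat_0.not_eq_extremum power_one)
  hence "z * cnj z = 1" by (metis complex_norm_square of_real_1 power_one)
  hence "cnj (z ^ k) * z ^ k = 1" by (simp add: power_mult_distrib[symmetric] mult.commute)
  moreover have "z ^ (n - k) * z ^ k = 1" using assms by (simp add: power_add[symmetric])
  ultimately show ?thesis by (metis mult_cancel_right zero_neq_one mult_zero_left)
qed (use assms in simp)

lemma root_of_unity_pow_mod_diff:
  fixes z :: "'a :: field"
  assumes "z ^ n = 1" "i < n"
  shows "z ^ ((n - i) mod n) = inverse (z ^ i)"
proof (cases "i = 0")
  case False
  have "z ^ i * z ^ (n - i) = 1" using assms by (simp add: power_add[symmetric])
  hence "inverse (z ^ i) = z ^ (n - i)" by (rule inverse_unique)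
  thus ?thesis using False assms(2) by simp
qed simp

lemma card_residue_class:
  fixes n m e :: nat
  assumes "n > 0" "n dvd m"
  shows "card {k. k < m \<and> [k = e] (mod n)} = m div n"
proof -
  have "{k. k < m \<and> [k = e] (mod n)} = (\<lambda>t. e mod n + n * t) ` {..< m div n}"
  proof (intro equalityI subsetI)
    fix k assume k: "k \<in> {k. k < m \<and> [k = e] (mod n)}"
    hence "k = e mod n + n * (k div n)" by (metis cong_def div_mult_mod_eq add.commute mult.commute mem_Collect_eq)
    moreover have "k div n < m div n" using k assms
      by (metis div_less_iff_less_mult dvd_div_mult_self mem_Collect_eq)
    ultimately show "k \<in> (\<lambda>t. e mod n + n * t) ` {..< m div n}" by blast
  next
    fix k assume "k \<in> (\<lambda>t. e mod n + n * t) ` {..< m div n}"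
    then obtain t where t: "t < m div n" "k = e mod n + n * t" by auto
    have "k < n * (t + 1)" using t assms by simp
    also have "\<dots> \<le> m" using t assms by (metis Suc_eq_plus1 Suc_leI dvd_mult_div_cancel mult_le_mono2)
    finally show "k \<in> {k. k < m \<and> [k = e] (mod n)}" using t by (simp add: cong_def)
  qed
  moreover have "inj_on (\<lambda>t. e mod n + n * t) {..< m div n}" using assms by (intro inj_onI) simp
  ultimately show ?thesis by (simp add: card_image)
qed

lemma sum_swap_pairs:
  "(\<Sum>x\<in>A. \<Sum>y\<in>B. \<Sum>i\<in>I. \<Sum>j\<in>J. f x y i j) = (\<Sum>i\<in>I. \<Sum>j\<in>J. \<Sum>x\<in>A. \<Sum>y\<in>B. f x y i j)"
proof -
  have "(\<Sum>x\<in>A. \<Sum>y\<in>B. \<Sum>i\<in>I. \<Sum>j\<in>J. f x y i j) = (\<Sum>x\<in>A. \<Sum>i\<in>I. \<Sum>y\<in>B. \<Sum>j\<in>J. f x y i j)"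
    by (rule sum.cong[OF refl], rule sum.swap)
  also have "\<dots> = (\<Sum>x\<in>A. \<Sum>i\<in>I. \<Sum>j\<in>J. \<Sum>y\<in>B. f x y i j)"
    by (rule sum.cong[OF refl], rule sum.cong[OF refl], rule sum.swap)
  also have "\<dots> = (\<Sum>i\<in>I. \<Sum>x\<in>A. \<Sum>j\<in>J. \<Sum>y\<in>B. f x y i j)"
    by (rule sum.swap)
  also have "\<dots> = (\<Sum>i\<in>I. \<Sum>j\<in>J. \<Sum>x\<in>A. \<Sum>y\<in>B. f x y i j)"
    by (rule sum.cong[OF refl], rule sum.swap)
  finally show ?thesis .
qed

lemma sum_swap_3: "(\<Sum>i\<in>I. \<Sum>x\<in>A. \<Sum>y\<in>B. f i x y) = (\<Sum>x\<in>A. \<Sum>y\<in>B. \<Sum>i\<in>I. f i x y)"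
  by (subst sum.swap) (rule sum.cong[OF refl], rule sum.swap)

section \<open>The square \<open>{..<n}\<^sup>2\<close> folded onto a triangle\<close>

definition triangle :: "nat \<Rightarrow> (nat \<times> nat) set" where
  "triangle n = {(i, j). 0 < i \<and> 0 < j \<and> i + j < n}"

lemma finite_triangle: "finite (triangle n)"
  by (rule finite_subset[of _ "{..<n} \<times> {..<n}"]) (auto simp: triangle_def)

lemma sum_square_split:
  fixes F :: "nat \<Rightarrow> nat \<Rightarrow> 'a :: comm_monoid_add"
  shows "(\<Sum>i<n. \<Sum>j<n. F i j) = (\<Sum>j<n. F 0 j) + (\<Sum>i\<in>{1..<n}. F i 0) + (\<Sum>i\<in>{1..<n}. F i (n - i))
    + (\<Sum>(i, j)\<in>triangle n. F i j) + (\<Sum>(i, j)\<in>triangle n. F (n - i) (n - j))"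
proof -
  let ?S = "{..<n} \<times> {..<n}" and ?G = "\<lambda>z. F (fst z) (snd z)"
  let ?P1 = "\<lambda>z. fst z = 0" and ?P2 = "\<lambda>z. 0 < fst z \<and> snd z = 0"
  let ?P3 = "\<lambda>z. 0 < fst z \<and> 0 < snd z \<and> fst z + snd z = n"
  let ?P4 = "\<lambda>z. 0 < fst z \<and> 0 < snd z \<and> fst z + snd z < n"
  let ?P5 = "\<lambda>z. 0 < fst z \<and> 0 < snd z \<and> n < fst z + snd z"
  have "(\<Sum>i<n. \<Sum>j<n. F i j) = (\<Sum>z\<in>?S. ?G z)" by (simp add: sum.cartesian_product case_prod_unfold)
  also have "\<dots> = (\<Sum>z\<in>?S. (if ?P1 z then ?G z else 0) + (if ?P2 z then ?G z else 0)
      + (if ?P3 z then ?G z else 0) + (if ?P4 z then ?G z else 0) + (if ?P5 z then ?G z else 0))"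
    by (rule sum.cong[OF refl]) auto
  also have "\<dots> = (\<Sum>z\<in>{z \<in> ?S. ?P1 z}. ?G z) + (\<Sum>z\<in>{z \<in> ?S. ?P2 z}. ?G z)
      + (\<Sum>z\<in>{z \<in> ?S. ?P3 z}. ?G z) + (\<Sum>z\<in>{z \<in> ?S. ?P4 z}. ?G z) + (\<Sum>z\<in>{z \<in> ?S. ?P5 z}. ?G z)"
    by (simp only: sum.distrib sum.inter_filter[OF finite_cartesian_product[OF finite_lessThan finite_lessThan]])
  also have "(\<Sum>z\<in>{z \<in> ?S. ?P1 z}. ?G z) = (\<Sum>j<n. F 0 j)"
    by (rule sum.reindex_bij_witness[where i = "\<lambda>j. (0, j)" and j = snd]) auto
  also have "(\<Sum>z\<in>{z \<in> ?S. ?P2 z}. ?G z) = (\<Sum>i\<in>{1..<n}. F i 0)"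
    by (rule sum.reindex_bij_witness[where i = "\<lambda>i. (i, 0)" and j = fst]) auto
  also have "(\<Sum>z\<in>{z \<in> ?S. ?P3 z}. ?G z) = (\<Sum>i\<in>{1..<n}. F i (n - i))"
    by (rule sum.reindex_bij_witness[where i = "\<lambda>i. (i, n - i)" and j = fst]) auto
  also have "(\<Sum>z\<in>{z \<in> ?S. ?P4 z}. ?G z) = (\<Sum>(i, j)\<in>triangle n. F i j)"
    by (rule sum.cong) (auto simp: triangle_def)
  also have "(\<Sum>z\<in>{z \<in> ?S. ?P5 z}. ?G z) = (\<Sum>(i, j)\<in>triangle n. F (n - i) (n - j))"
    by (rule sum.reindex_bij_witness[where i = "\<lambda>z. (n - fst z, n - snd z)" and j = "\<lambda>z. (n - fst z, n - snd z)"])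
      (auto simp: triangle_def)
  finally show ?thesis .
qed

lemma sum_triangle_fold:
  fixes R :: "nat \<Rightarrow> nat \<Rightarrow> real"
  assumes swap: "\<And>i j. (i, j) \<in> triangle n \<Longrightarrow> R j i = R i j"
  shows "(\<Sum>(i, j)\<in>triangle n. R i j) = (\<Sum>i\<in>{1..<n}. \<Sum>j\<in>{i..<n - i}. (2 - (if i = j then 1 else 0)) * R i j)"
proof -
  let ?T = "triangle n" and ?R = "\<lambda>z. R (fst z) (snd z)"
  have "(\<Sum>z\<in>?T. if snd z < fst z then ?R z else 0) = (\<Sum>z\<in>?T. if fst z < snd z then ?R z else 0)"
    by (rule sum.reindex_bij_witness[where i = "\<lambda>z. (snd z, fst z)" and j = "\<lambda>z. (snd z, fst z)"])
      (auto simp: triangle_def swap)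
  have "(\<Sum>z\<in>?T. ?R z) = (\<Sum>z\<in>?T. (if fst z \<le> snd z then ?R z else 0) + (if snd z < fst z then ?R z else 0))"
    by (intro sum.cong refl) auto
  also have "\<dots> = (\<Sum>z\<in>?T. if fst z \<le> snd z then ?R z else 0) + (\<Sum>z\<in>?T. if fst z < snd z then ?R z else 0)"
    unfolding sum.distrib \<open>(\<Sum>z\<in>?T. if snd z < fst z then ?R z else 0) = _\<close> ..
  also have "\<dots> = (\<Sum>z\<in>?T. if fst z \<le> snd z then (2 - (if fst z = snd z then 1 else 0)) * ?R z else 0)"
    unfolding sum.distrib[symmetric] by (intro sum.cong refl) auto
  also have "\<dots> = (\<Sum>z\<in>{z \<in> ?T. fst z \<le> snd z}. (2 - (if fst z = snd z then 1 else 0)) * ?R z)"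
    by (rule sum.inter_filter[OF finite_triangle, symmetric])
  also have "{z \<in> ?T. fst z \<le> snd z} = Sigma {1..<n} (\<lambda>i. {i..<n - i})"
    by (auto simp: triangle_def)
  finally show ?thesis by (simp add: sum.Sigma case_prod_unfold)
qed

lemma S_set_eq_image: "S_set N p a = (\<lambda>j. a ^ j mod N) ` {..<p - 1}"
  by (auto simp: S_set_def)

lemma shift1_eq_image: "shift1 N S = (\<lambda>s. (s + 1) mod N) ` S"
  by (auto simp: shift1_def)

lemma pow_mod_ord:
  fixes m a k :: nat
  assumes "coprime m a"
  shows "a ^ (k mod ord m a) mod m = a ^ k mod m"
  using order_divides_expdiff[OF assms] by (simp add: cong_def)

lemma dlog_pow_mod:
  assumes "coprime m a"
  shows "dlog m a (a ^ k mod m) = k mod ord m a"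
  unfolding dlog_def
proof (rule Least_equality)
  show "[a ^ (k mod ord m a) = a ^ k mod m] (mod m)"
    using pow_mod_ord[OF assms] by (simp add: cong_def)
next
  fix j assume "[a ^ j = a ^ k mod m] (mod m)"
  hence "[j = k] (mod ord m a)" using order_divides_expdiff[OF assms] by (simp add: cong_def)
  thus "k mod ord m a \<le> j" by (metis cong_def mod_less_eq_dividend)
qed

lemma exp_two_pi_i_of_nat:
  "exp (2 * complex_of_real pi * \<i> * of_nat k / of_nat n) = exp (2 * complex_of_real pi * \<i> / of_nat n) ^ k"
  by (metis exp_of_nat_mult mult.commute times_divide_eq_right)

lemma exp_two_pi_i_pow_eq:
  assumes "n > 0"
  shows "exp (2 * complex_of_real pi * \<i> / of_nat n) ^ k = exp (2 * complex_of_real pi * \<i> / of_nat n) ^ m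
    \<longleftrightarrow> [k = m] (mod n)"
  using complex_root_unity_eq[of n k m] assms
  by (simp add: exp_two_pi_i_of_nat cong_def)

locale pq_setting =
  fixes p q a n :: nat
  assumes q_odd: "odd q" and q_gt_1: "q > 1" and p_prime: "prime p" and q_less_p: "q < p"
    and coprime_a: "coprime a (p * q)"
    and pow_half_minus_one: "[a ^ ((p - 1) div 2) = p * q - 1] (mod (p * q))"
    and primroot: "residue_primroot p a" and n_def: "n = ord q a"
begin

abbreviation "h \<equiv> (p - 1) div 2"
abbreviation "L x \<equiv> dlog p a x"
abbreviation "d b \<equiv> dlog q a b"
abbreviation "w \<equiv> exp (2 * complex_of_real pi * \<i> / of_nat n)"

lemma p_gt_2: "p > 2"
  using q_odd q_gt_1 q_less_p by presburger

lemma p_minus_1_eq: "p - 1 = 2 * h"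
  using p_prime p_gt_2 prime_odd_nat by fastforce

lemma coprime_p_a: "coprime p a" and coprime_q_a: "coprime q a"
  using coprime_a by (simp_all add: coprime_commute)

lemma ord_p: "ord p a = p - 1"
  using primroot p_prime by (simp add: residue_primroot_def totient_prime)

lemma n_pos: "n > 0"
  using coprime_q_a n_def ord_eq_0 by simp

lemma not_p_dvd_pow: "\<not> [a ^ k = 0] (mod p)"
proof
  assume "[a ^ k = 0] (mod p)"
  hence "p dvd a" using p_prime by (simp add: cong_0_iff prime_dvd_power)
  thus False using coprime_p_a p_gt_2 by (simp add: coprime_absorb_left)
qed

text \<open>The hypothesis \<open>a\<^sup>h \<equiv> -1 (mod pq)\<close>, in the additive form that makes sense in \<open>\<nat>\<close>.\<close>

lemma pow_half_add_cong:
  assumes "m dvd p * q"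
  shows "[a ^ (h + k) + a ^ k = 0] (mod m)"
proof -
  have "[a ^ h + 1 = (p * q - 1) + 1] (mod (p * q))"
    using pow_half_minus_one by (rule cong_add) simp
  moreover have "p * q - 1 + 1 = p * q" using p_gt_2 q_gt_1 by simp
  ultimately have "[a ^ h + 1 = 0] (mod m)"
    using assms by (metis cong_dvd_modulus_nat cong_mult_self_right mult_1 cong_trans)
  hence "[(a ^ h + 1) * a ^ k = 0 * a ^ k] (mod m)" by (rule cong_mult) simp
  thus ?thesis by (simp add: power_add algebra_simps)
qed

lemma n_dvd_p_minus_1: "n dvd p - 1"
proof -
  have "[a ^ (h + h) + a ^ h = 0] (mod q)" "[a ^ (h + 0) + a ^ 0 = 0] (mod q)"
    by (rule pow_half_add_cong, simp)+
  hence "[a ^ (h + h) + a ^ h = 1 + a ^ h] (mod q)"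
    by (metis add.commute add_0_right cong_sym cong_trans power_0)
  hence "[a ^ (h + h) = 1] (mod q)" by (simp only: cong_add_rcancel_nat)
  hence "[a ^ (p - 1) = 1] (mod q)" using p_minus_1_eq by (simp only: mult_2)
  thus ?thesis using n_def ord_divides by blast
qed

lemma L_pow: "L (a ^ k mod p) = k mod (p - 1)"
  using dlog_pow_mod[OF coprime_p_a] ord_p by simp

lemma d_pow: "d (a ^ k mod q) = k mod n"
  using dlog_pow_mod[OF coprime_q_a] n_def by simp

lemma pow_mod_q_eq_iff: "a ^ k mod q = a ^ m mod q \<longleftrightarrow> [k = m] (mod n)"
  using order_divides_expdiff[OF coprime_q_a] n_def by (simp add: cong_def)

lemma pow_mod_p_bij: "bij_betw (\<lambda>k. a ^ k mod p) {..<p - 1} {1..<p}"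
proof -
  have "bij_betw (\<lambda>k. a ^ k mod p) {..<totient p} (totatives p)"
    using residue_primroot_is_generator[OF _ primroot] p_gt_2 by simp
  moreover have "totatives p = {1..<p}" using p_prime totatives_prime p_gt_2 by auto
  ultimately show ?thesis using p_prime by (simp add: totient_prime)
qed

lemma pow_L: assumes "x \<in> {1..<p}" shows "a ^ L x mod p = x" and "L x < p - 1"
proof -
  obtain k where "k < p - 1" "x = a ^ k mod p"
    using pow_mod_p_bij assms by (force simp: bij_betw_def)
  thus "a ^ L x mod p = x" "L x < p - 1" using L_pow by simp_all
qed

lemma L_1: "L 1 = 0"
  using L_pow[of 0] p_gt_2 by simp

lemma L_minus_1: "L (p - 1) = h"
proof -
  have "(a ^ h mod p + 1) mod p = 0"
    using pow_half_add_cong[of p 0] by (simp add: cong_def mod_Suc_eq)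
  moreover have "a ^ h mod p < p" using p_gt_2 by simp
  ultimately have "a ^ h mod p = p - 1"
    by (cases "a ^ h mod p + 1 < p") auto
  thus ?thesis using L_pow[of h] p_minus_1_eq p_gt_2 by simp
qed

lemma cyc_elem: assumes "b \<in> cyc q a" shows "a ^ d b mod q = b" and "d b < n"
proof -
  obtain k where "b = a ^ k mod q" using assms by (auto simp: cyc_def)
  thus "a ^ d b mod q = b" "d b < n"
    using d_pow pow_mod_ord[OF coprime_q_a] n_def n_pos by simp_all
qed

lemma cyc_bounds: assumes "b \<in> cyc q a" shows "0 < b" and "b < q"
proof -
  obtain k where k: "b = a ^ k mod q" using assms by (auto simp: cyc_def)
  show "b < q" using k q_gt_1 by simp
  have "coprime b q" using k coprime_q_a q_gt_1 by (simp add: coprime_commute)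
  thus "0 < b" using q_gt_1 by (cases "b = 0") auto
qed

lemma pow_eq_cyc_iff: assumes "b \<in> cyc q a" shows "a ^ k mod q = b \<longleftrightarrow> [k = d b] (mod n)"
  using pow_mod_q_eq_iff cyc_elem(1)[OF assms] by metis

lemma minus_cyc: assumes "c \<in> cyc q a" shows "q - c \<in> cyc q a"
proof -
  define u where "u = a ^ (h + d c) mod q"
  have u: "u \<in> cyc q a" unfolding u_def cyc_def by blast
  have "(u + c) mod q = (a ^ (h + d c) mod q + a ^ d c mod q) mod q"
    using cyc_elem(1)[OF assms] by (simp add: u_def)
  also have "\<dots> = (a ^ (h + d c) + a ^ d c) mod q" by (rule mod_add_eq)
  also have "\<dots> = 0" using pow_half_add_cong[of q "d c"] by (simp add: cong_def)
  finally have "(u + c) mod q = 0" .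
  moreover have "0 < u + c" "u + c < 2 * q" using cyc_bounds[OF u] cyc_bounds[OF assms] by simp_all
  ultimately have "u + c = q"
    by (cases "u + c < q") (auto simp: le_mod_geq)
  thus ?thesis using u by (metis add_diff_cancel_right')
qed

lemma Bset_iff: "b \<in> Bset q a \<longleftrightarrow> b \<in> cyc q a \<and> 2 \<le> b \<and> b - 1 \<in> cyc q a"
proof (cases "b \<in> cyc q a")
  case True
  hence b: "0 < b" "b < q" using cyc_bounds by auto
  show ?thesis
  proof (cases "b = 1")
    case True thus ?thesis using cyc_bounds(1) by (force simp: Bset_def)
  next
    case False
    hence "(b + q - 1) mod q = b - 1" using b by (simp add: le_mod_geq)
    thus ?thesis using b False True by (auto simp: Bset_def)
  qed
qed (simp add: Bset_def)

lemma finite_Bset: "finite (Bset q a)"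
  by (rule finite_subset[of _ "{..<q}"]) (auto simp: Bset_def dest: cyc_bounds(2))

text \<open>Inside \<open>\<int>/q\<int>\<close>, \<open>q + 1 - b\<close> is \<open>1 - b\<close>.\<close>

lemma Bset_reflect: assumes "b \<in> Bset q a" shows "q + 1 - b \<in> Bset q a" and "b < q"
proof -
  have b: "b \<in> cyc q a" "2 \<le> b" "b - 1 \<in> cyc q a" using assms Bset_iff by auto
  show "b < q" using cyc_bounds(2)[OF b(1)] .
  hence "q - (b - 1) = q + 1 - b" "q - b = q + 1 - b - 1" using b by auto
  thus "q + 1 - b \<in> Bset q a"
    using minus_cyc[OF b(3)] minus_cyc[OF b(1)] \<open>b < q\<close> unfolding Bset_iff by simp
qed

lemma cong_sum_1_iff:
  assumes "u \<in> cyc q a" "v \<in> cyc q a"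
  shows "[u + v = 1] (mod q) \<longleftrightarrow> u \<in> Bset q a \<and> v = q + 1 - u"
proof -
  have u: "0 < u" "u < q" and v: "0 < v" "v < q" using cyc_bounds assms by auto
  have "[u + v = 1] (mod q) \<longleftrightarrow> u + v = q + 1"
    using u v q_gt_1 by (cases "u + v < q") (auto simp: cong_def le_mod_geq)
  also have "\<dots> \<longleftrightarrow> u \<in> Bset q a \<and> v = q + 1 - u"
  proof
    assume uv: "u + v = q + 1"
    hence "u - 1 = q - v" by simp
    thus "u \<in> Bset q a \<and> v = q + 1 - u" using minus_cyc[OF assms(2)] assms(1) uv v unfolding Bset_iff by auto
  qed (use u in auto)
  finally show ?thesis .
qed

lemma c_coef_eq:
  "c_coef q a n i j = (\<Sum>b\<in>Bset q a. inverse (psi q a n b) ^ i * inverse (psi q a n (q + 1 - b)) ^ j)"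
  unfolding c_coef_def
proof (intro sum.cong refl)
  fix b assume "b \<in> Bset q a"
  hence "2 \<le> b" "b < q" using Bset_iff Bset_reflect(2) by auto
  hence "(q + 1 - b) mod q = q + 1 - b" by simp
  thus "inverse (psi q a n b) ^ i * inverse (psi q a n ((q + 1 - b) mod q)) ^ j =
    inverse (psi q a n b) ^ i * inverse (psi q a n (q + 1 - b)) ^ j" by simp
qed

section \<open>Reduction to \<open>\<FF>\<^sub>p\<close>\<close>

text \<open>\<open>p + 1 - x\<close> is \<open>1 - x\<close> in \<open>\<FF>\<^sub>p\<close>, so \<open>x \<in> pair_set\<close> says that \<open>x \<noteq> 0, 1\<close> and
  \<open>\<beta>\<^bsup>log x\<^esup> + \<beta>\<^bsup>log (1 - x)\<^esup> = 1\<close>.\<close>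

definition pair_set :: "nat set" where
  "pair_set = {x \<in> {2..<p}. [a ^ L x + a ^ L (p + 1 - x) = 1] (mod q)}"

lemma pow_half_log_add_1_cong:
  assumes "x \<in> {2..<p}"
  shows "[a ^ (h + L (p + 1 - x)) + 1 = x] (mod p)"
proof -
  let ?y = "p + 1 - x"
  have "?y \<in> {1..<p}" using assms by auto
  hence "[a ^ L ?y = ?y] (mod p)" using pow_L(1)[of ?y] by (auto simp: cong_def)
  hence "[a ^ (h + L ?y) + a ^ L ?y = a ^ (h + L ?y) + ?y] (mod p)" by (rule cong_add_lcancel_nat[THEN iffD2])
  moreover have "[a ^ (h + L ?y) + a ^ L ?y = 0] (mod p)" by (rule pow_half_add_cong) simp
  ultimately have "[a ^ (h + L ?y) + ?y = 0] (mod p)" by (rule cong_trans[OF cong_sym])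
  hence "[(a ^ (h + L ?y) + ?y) + 1 = 0 + 1] (mod p)" by (rule cong_add) simp
  hence "[(a ^ (h + L ?y) + 1) + ?y = 1] (mod p)" by (simp add: ac_simps)
  moreover have "x + ?y = p + 1" using assms by simp
  hence "[1 = x + ?y] (mod p)" unfolding cong_def by (simp only: mod_add_self1)
  ultimately have "[(a ^ (h + L ?y) + 1) + ?y = x + ?y] (mod p)" by (rule cong_trans)
  thus ?thesis by (simp only: cong_add_rcancel_nat)
qed

lemma pow_add_1_cong_iff:
  assumes x: "x \<in> {1..<p}" and k: "k < p - 1"
  shows "[a ^ k + 1 = x] (mod p) \<longleftrightarrow> 2 \<le> x \<and> k = (h + L (p + 1 - x)) mod (p - 1)"
proof
  assume c: "[a ^ k + 1 = x] (mod p)"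
  have "x \<noteq> 1"
  proof
    assume "x = 1"
    hence "[a ^ k + 1 = 0 + 1] (mod p)" using c by simp
    thus False using not_p_dvd_pow by (simp only: cong_add_rcancel_nat)
  qed
  hence x2: "x \<in> {2..<p}" using x by auto
  have "[a ^ k + 1 = a ^ (h + L (p + 1 - x)) + 1] (mod p)"
    using cong_trans[OF c cong_sym[OF pow_half_log_add_1_cong[OF x2]]] .
  hence "[a ^ k = a ^ (h + L (p + 1 - x))] (mod p)" by (simp only: cong_add_rcancel_nat)
  hence "[k = h + L (p + 1 - x)] (mod (p - 1))"
    using order_divides_expdiff[OF coprime_p_a] ord_p by simp
  thus "2 \<le> x \<and> k = (h + L (p + 1 - x)) mod (p - 1)" using x2 k by (simp add: cong_def)
next
  assume "2 \<le> x \<and> k = (h + L (p + 1 - x)) mod (p - 1)"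
  hence x2: "x \<in> {2..<p}" and k: "k = (h + L (p + 1 - x)) mod (p - 1)" using x by auto
  have "[a ^ k = a ^ (h + L (p + 1 - x))] (mod p)"
    using pow_mod_ord[OF coprime_p_a] ord_p k by (simp add: cong_def)
  hence "[a ^ k + 1 = a ^ (h + L (p + 1 - x)) + 1] (mod p)" by (rule cong_add) simp
  thus "[a ^ k + 1 = x] (mod p)" using pow_half_log_add_1_cong[OF x2] by (rule cong_trans)
qed

lemma pow_half_add_mod_cong:
  "[a ^ ((h + m) mod (p - 1)) + a ^ m = 0] (mod q)"
proof -
  have "[(h + m) mod (p - 1) = h + m] (mod n)"
    using n_dvd_p_minus_1 by (metis cong_dvd_modulus_nat cong_mod_left cong_refl)
  hence "[a ^ ((h + m) mod (p - 1)) = a ^ (h + m)] (mod q)"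
    using pow_mod_q_eq_iff by (simp add: cong_def)
  hence "[a ^ ((h + m) mod (p - 1)) + a ^ m = a ^ (h + m) + a ^ m] (mod q)" by (rule cong_add) simp
  moreover have "[a ^ (h + m) + a ^ m = 0] (mod q)" by (rule pow_half_add_cong) simp
  ultimately show ?thesis by (rule cong_trans)
qed

lemma cong_pow_half_shift_iff:
  "[a ^ j = a ^ ((h + m) mod (p - 1)) + 1] (mod q) \<longleftrightarrow> [a ^ j + a ^ m = 1] (mod q)"
proof -
  let ?k = "(h + m) mod (p - 1)"
  have "[(a ^ ?k + a ^ m) + 1 = 0 + 1] (mod q)"
    by (rule cong_add[OF pow_half_add_mod_cong cong_refl])
  hence one: "[(a ^ ?k + 1) + a ^ m = 1] (mod q)" by (simp add: ac_simps)
  have "[a ^ j + a ^ m = (a ^ ?k + 1) + a ^ m] (mod q) \<longleftrightarrow> [a ^ j + a ^ m = 1] (mod q)"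
    using cong_trans[OF _ one] cong_trans[OF _ cong_sym[OF one]] by (rule iffI)
  thus ?thesis by (simp only: cong_add_rcancel_nat)
qed

lemma mem_shift1_iff:
  assumes "s < p * q"
  shows "s \<in> shift1 (p * q) (S_set (p * q) p a) \<longleftrightarrow> (\<exists>k<p - 1. [s = a ^ k + 1] (mod (p * q)))"
proof -
  have "s \<in> shift1 (p * q) (S_set (p * q) p a) \<longleftrightarrow> (\<exists>k<p - 1. s = (a ^ k mod (p * q) + 1) mod (p * q))"
    unfolding shift1_eq_image S_set_eq_image image_image by blast
  also have "\<dots> \<longleftrightarrow> (\<exists>k<p - 1. [s = a ^ k + 1] (mod (p * q)))"
    using assms by (simp add: cong_def mod_Suc_eq)
  finally show ?thesis .
qed

lemma cong_mod_pq_iff: "[u = v] (mod (p * q)) \<longleftrightarrow> [u = v] (mod p) \<and> [u = v] (mod q)"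
proof -
  have "coprime p q" using p_prime q_less_p q_gt_1 by (simp add: nat_dvd_not_less prime_imp_coprime_nat)
  thus ?thesis using coprime_cong_mult_nat cong_modulus_mult_nat by (metis mult.commute)
qed

lemma pow_mem_shift1_iff:
  assumes j: "j < p - 1"
  shows "a ^ j mod (p * q) \<in> shift1 (p * q) (S_set (p * q) p a) \<longleftrightarrow> a ^ j mod p \<in> pair_set"
proof -
  define x where "x = a ^ j mod p"
  let ?y = "p + 1 - x"
  let ?k = "(h + L ?y) mod (p - 1)"
  have x: "x \<in> {1..<p}" unfolding x_def using pow_mod_p_bij j by (auto simp: bij_betw_def)
  have Lx: "L x = j" unfolding x_def using L_pow j by simp
  have px: "[a ^ j = a ^ k + 1] (mod p) \<longleftrightarrow> [a ^ k + 1 = x] (mod p)" for k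
    by (auto simp: cong_def x_def)
  have "a ^ j mod (p * q) \<in> shift1 (p * q) (S_set (p * q) p a) \<longleftrightarrow>
      (\<exists>k<p - 1. [a ^ j mod (p * q) = a ^ k + 1] (mod (p * q)))"
    by (rule mem_shift1_iff) (use p_gt_2 q_gt_1 in simp)
  also have "\<dots> \<longleftrightarrow> (\<exists>k<p - 1. [a ^ k + 1 = x] (mod p) \<and> [a ^ j = a ^ k + 1] (mod q))"
    unfolding cong_mod_left by (simp only: cong_mod_pq_iff px)
  also have "\<dots> \<longleftrightarrow> 2 \<le> x \<and> [a ^ j = a ^ ?k + 1] (mod q)"
  proof
    assume "\<exists>k<p - 1. [a ^ k + 1 = x] (mod p) \<and> [a ^ j = a ^ k + 1] (mod q)"
    then obtain k where "k < p - 1" "[a ^ k + 1 = x] (mod p)" "[a ^ j = a ^ k + 1] (mod q)" by auto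
    thus "2 \<le> x \<and> [a ^ j = a ^ ?k + 1] (mod q)" using pow_add_1_cong_iff[OF x] by simp
  next
    assume *: "2 \<le> x \<and> [a ^ j = a ^ ?k + 1] (mod q)"
    have "?k < p - 1" using p_gt_2 by simp
    moreover from this have "[a ^ ?k + 1 = x] (mod p)" using pow_add_1_cong_iff[OF x] * by simp
    ultimately show "\<exists>k<p - 1. [a ^ k + 1 = x] (mod p) \<and> [a ^ j = a ^ k + 1] (mod q)"
      using * by blast
  qed
  also have "[a ^ j = a ^ ?k + 1] (mod q) \<longleftrightarrow> [a ^ L x + a ^ L ?y = 1] (mod q)"
    unfolding Lx by (rule cong_pow_half_shift_iff)
  finally show ?thesis using x unfolding x_def pair_set_def by auto
qed

lemma card_S_inter_shift1: "card (S_set (p * q) p a \<inter> shift1 (p * q) (S_set (p * q) p a)) = card pair_set"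
proof -
  let ?f = "\<lambda>j. a ^ j mod (p * q)" and ?e = "\<lambda>j. a ^ j mod p"
  define J where "J = {j \<in> {..<p - 1}. ?e j \<in> pair_set}"
  have J: "J \<subseteq> {..<p - 1}" unfolding J_def by blast
  have inj_e: "inj_on ?e {..<p - 1}" and img_e: "?e ` {..<p - 1} = {1..<p}"
    using pow_mod_p_bij by (simp_all add: bij_betw_def)
  have "?f j mod p = ?e j" for j by (simp add: mod_mod_cancel)
  hence inj_f: "inj_on ?f {..<p - 1}" using inj_e by (metis (no_types, lifting) inj_on_def)
  have "S_set (p * q) p a \<inter> shift1 (p * q) (S_set (p * q) p a) =
      ?f ` {j \<in> {..<p - 1}. ?f j \<in> shift1 (p * q) (S_set (p * q) p a)}"
    unfolding S_set_eq_image by blast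
  also have "{j \<in> {..<p - 1}. ?f j \<in> shift1 (p * q) (S_set (p * q) p a)} = J"
    unfolding J_def using pow_mem_shift1_iff by blast
  finally have "card (S_set (p * q) p a \<inter> shift1 (p * q) (S_set (p * q) p a)) = card J"
    using card_image[OF inj_on_subset[OF inj_f J]] by simp
  moreover have "pair_set = ?e ` J"
  proof -
    have "pair_set \<subseteq> ?e ` {..<p - 1}" unfolding img_e pair_set_def by auto
    thus ?thesis unfolding J_def by blast
  qed
  hence "card pair_set = card J" using card_image[OF inj_on_subset[OF inj_e J]] by simp
  ultimately show ?thesis by simp
qed

section \<open>Fourier expansion\<close>

lemma w_pow_n: "(w ^ k) ^ n = 1"
  using complex_root_unity[of n k] n_pos by (simp add: exp_two_pi_i_of_nat)

lemma sum_powers_w: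
  "(\<Sum>i<n. (w ^ A * inverse (w ^ B)) ^ i) = (if [A = B] (mod n) then of_nat n else 0)"
proof -
  have "(w ^ A * inverse (w ^ B)) ^ n = 1"
    by (simp add: power_mult_distrib power_inverse w_pow_n)
  moreover have "w ^ A * inverse (w ^ B) = 1 \<longleftrightarrow> [A = B] (mod n)"
    using exp_two_pi_i_pow_eq[OF n_pos] by (simp add: field_simps)
  ultimately show ?thesis by (simp add: sum_powers_root_of_unity)
qed

lemma chi_eq: "chi p a n x = w ^ L x"
  unfolding chi_def by (rule exp_two_pi_i_of_nat)

lemma psi_eq: "psi q a n b = w ^ d b"
  unfolding psi_def by (rule exp_two_pi_i_of_nat)

definition chi_psi :: "nat \<Rightarrow> nat \<Rightarrow> complex" where
  "chi_psi x b = chi p a n x * inverse (psi q a n b)"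

lemma chi_psi_eq: "chi_psi x b = w ^ L x * inverse (w ^ d b)"
  by (simp add: chi_psi_def chi_eq psi_eq)

lemma chi_psi_pow_n: "chi_psi x b ^ n = 1"
  by (simp add: chi_psi_eq power_mult_distrib power_inverse w_pow_n)

lemma sum_powers_chi_psi:
  "(\<Sum>i<n. chi_psi x b ^ i) = (if [L x = d b] (mod n) then of_nat n else 0)"
  unfolding chi_psi_eq by (rule sum_powers_w)

definition jacobi_inner :: "nat \<Rightarrow> nat \<Rightarrow> complex" where
  "jacobi_inner i j = (\<Sum>x\<in>{2..<p}. chi p a n x ^ i * chi p a n (p + 1 - x) ^ j)"

abbreviation cJ :: "nat \<Rightarrow> nat \<Rightarrow> complex" where
  "cJ i j \<equiv> c_coef q a n i j * jacobi_inner i j"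

lemma cJ_expand:
  "cJ i j = (\<Sum>x\<in>{2..<p}. \<Sum>b\<in>Bset q a. chi_psi x b ^ i * chi_psi (p + 1 - x) (q + 1 - b) ^ j)"
proof -
  have "cJ i j = jacobi_inner i j * c_coef q a n i j" by (rule mult.commute)
  also have "\<dots> = (\<Sum>x\<in>{2..<p}. \<Sum>b\<in>Bset q a. (chi p a n x ^ i * chi p a n (p + 1 - x) ^ j) *
      (inverse (psi q a n b) ^ i * inverse (psi q a n (q + 1 - b)) ^ j))"
    unfolding jacobi_inner_def c_coef_eq by (rule sum_product)
  also have "\<dots> = (\<Sum>x\<in>{2..<p}. \<Sum>b\<in>Bset q a. chi_psi x b ^ i * chi_psi (p + 1 - x) (q + 1 - b) ^ j)"
    by (simp add: chi_psi_def power_mult_distrib ac_simps)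
  finally show ?thesis .
qed

lemma sum_powers_chi_psi_prod:
  assumes x: "x \<in> {2..<p}"
  shows "(\<Sum>b\<in>Bset q a. (\<Sum>i<n. chi_psi x b ^ i) * (\<Sum>j<n. chi_psi (p + 1 - x) (q + 1 - b) ^ j))
    = (if x \<in> pair_set then of_nat n ^ 2 else 0)"
proof -
  define u v where "u = a ^ L x mod q" and "v = a ^ L (p + 1 - x) mod q"
  have uv: "u \<in> cyc q a" "v \<in> cyc q a" unfolding u_def v_def cyc_def by blast+
  have "(\<Sum>b\<in>Bset q a. (\<Sum>i<n. chi_psi x b ^ i) * (\<Sum>j<n. chi_psi (p + 1 - x) (q + 1 - b) ^ j))
      = (\<Sum>b\<in>Bset q a. if u = b \<and> v = q + 1 - b then of_nat n ^ 2 else 0)"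
  proof (intro sum.cong refl)
    fix b assume b: "b \<in> Bset q a"
    have "b \<in> cyc q a" "q + 1 - b \<in> cyc q a" using b Bset_reflect(1) Bset_iff by blast+
    thus "(\<Sum>i<n. chi_psi x b ^ i) * (\<Sum>j<n. chi_psi (p + 1 - x) (q + 1 - b) ^ j) =
        (if u = b \<and> v = q + 1 - b then of_nat n ^ 2 else 0)"
      unfolding sum_powers_chi_psi u_def v_def by (simp add: pow_eq_cyc_iff power2_eq_square)
  qed
  also have "\<dots> = (if u \<in> Bset q a \<and> v = q + 1 - u then of_nat n ^ 2 else 0)"
    using finite_Bset by (subst sum.cong[OF refl, where h = "\<lambda>b. if u = b then (if v = q + 1 - u then of_nat n ^ 2 else 0) else 0"])
      (auto simp: sum.delta)
  also have "u \<in> Bset q a \<and> v = q + 1 - u \<longleftrightarrow> x \<in> pair_set"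
    using cong_sum_1_iff[OF uv] x unfolding pair_set_def u_def v_def cong_def by (simp add: mod_add_eq)
  finally show ?thesis .
qed

lemma card_pair_set_fourier: "of_nat (n ^ 2 * card pair_set) = (\<Sum>i<n. \<Sum>j<n. cJ i j)"
proof -
  have "pair_set = {x \<in> {2..<p}. x \<in> pair_set}" by (auto simp: pair_set_def)
  hence "of_nat (n ^ 2 * card pair_set) = (\<Sum>x\<in>{x \<in> {2..<p}. x \<in> pair_set}. of_nat n ^ 2 :: complex)"
    by (metis of_nat_mult of_nat_power sum_constant mult.commute)
  also have "\<dots> = (\<Sum>x\<in>{2..<p}. if x \<in> pair_set then of_nat n ^ 2 else 0)"
    by (rule sum.inter_filter) simp
  also have "\<dots> = (\<Sum>x\<in>{2..<p}. \<Sum>b\<in>Bset q a. \<Sum>i<n. \<Sum>j<n. chi_psi x b ^ i * chi_psi (p + 1 - x) (q + 1 - b) ^ j)"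
    by (simp add: sum_powers_chi_psi_prod[symmetric] sum_product)
  also have "\<dots> = (\<Sum>i<n. \<Sum>j<n. \<Sum>x\<in>{2..<p}. \<Sum>b\<in>Bset q a. chi_psi x b ^ i * chi_psi (p + 1 - x) (q + 1 - b) ^ j)"
    by (rule sum_swap_pairs)
  finally show ?thesis by (simp only: cJ_expand)
qed

lemma chi_pow_nontrivial:
  assumes "0 < i" "i < n"
  shows "chi_pow p a n i x = (if x mod p = 0 then 0 else chi p a n (x mod p) ^ i)"
proof -
  have a_mod: "a mod p \<in> {1..<p}" using not_p_dvd_pow[of 1] p_gt_2 by (auto simp: cong_def)
  have "L (a mod p) = 1" using L_pow[of 1] p_gt_2 by simp
  hence "chi p a n (a mod p) ^ i = w ^ i" by (simp add: chi_eq)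
  moreover have "w ^ i \<noteq> w ^ 0" using exp_two_pi_i_pow_eq[OF n_pos, of i 0] assms by (simp add: cong_def)
  ultimately have "\<not> (\<forall>y\<in>{1..<p}. chi p a n y ^ i = 1)" using a_mod by force
  thus ?thesis unfolding chi_pow_def char_ext_def by auto
qed

lemma jacobi_eq_jacobi_inner:
  assumes "0 < i" "i < n" "0 < j" "j < n"
  shows "jacobi p (chi_pow p a n i) (chi_pow p a n j) = jacobi_inner i j"
proof -
  have "{0..<p} = insert 0 (insert 1 {2..<p})" using p_gt_2 by auto
  hence "jacobi p (chi_pow p a n i) (chi_pow p a n j) =
      (\<Sum>c\<in>{2..<p}. chi_pow p a n i c * chi_pow p a n j ((p + 1 - c) mod p))"
    unfolding jacobi_def using p_gt_2 by (simp add: chi_pow_nontrivial[OF assms(1,2)] chi_pow_nontrivial[OF assms(3,4)])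
  also have "\<dots> = jacobi_inner i j"
    unfolding jacobi_inner_def
  proof (intro sum.cong refl)
    fix c assume c: "c \<in> {2..<p}"
    hence "(p + 1 - c) mod p = p + 1 - c" "c mod p = c" "p + 1 - c \<noteq> p" by auto
    thus "chi_pow p a n i c * chi_pow p a n j ((p + 1 - c) mod p) = chi p a n c ^ i * chi p a n (p + 1 - c) ^ j"
      using c by (simp add: chi_pow_nontrivial[OF assms(1,2)] chi_pow_nontrivial[OF assms(3,4)])
  qed
  finally show ?thesis .
qed

section \<open>The row, the column and the antidiagonal\<close>

lemma card_L_class: "card {y \<in> {1..<p}. [L y = e] (mod n)} = (p - 1) div n"
proof -
  let ?e = "\<lambda>k. a ^ k mod p"
  have "{y \<in> {1..<p}. [L y = e] (mod n)} = ?e ` {k. k < p - 1 \<and> [k = e] (mod n)}"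
  proof (intro equalityI subsetI)
    fix y assume "y \<in> {y \<in> {1..<p}. [L y = e] (mod n)}"
    thus "y \<in> ?e ` {k. k < p - 1 \<and> [k = e] (mod n)}"
      using pow_L[of y] by (intro rev_image_eqI[of "L y"]) auto
  next
    fix y assume "y \<in> ?e ` {k. k < p - 1 \<and> [k = e] (mod n)}"
    then obtain k where "k < p - 1" "[k = e] (mod n)" "y = ?e k" by blast
    thus "y \<in> {y \<in> {1..<p}. [L y = e] (mod n)}"
      using L_pow[of k] pow_mod_p_bij by (auto simp: bij_betw_def)
  qed
  moreover have "inj_on ?e {k. k < p - 1 \<and> [k = e] (mod n)}"
    using pow_mod_p_bij by (auto simp: bij_betw_def intro: inj_on_subset)
  ultimately show ?thesis using card_residue_class[OF n_pos n_dvd_p_minus_1] by (simp add: card_image)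
qed

text \<open>Each line of the square \<open>{..<n}\<^sup>2\<close> that we need sums, by orthogonality, to a count of
  \<open>x\<close> whose image under a bijection onto \<open>\<FF>\<^sub>p\<^sup>* - {y\<^sub>0}\<close> has prescribed index
  modulo \<open>n\<close>; the missing point \<open>y\<^sub>0\<close> never has that index.\<close>

lemma sum_L_class_punctured:
  assumes g: "bij_betw g {2..<p} ({1..<p} - {y0})" and y0: "\<not> [L y0 = e] (mod n)"
  shows "(\<Sum>x\<in>{2..<p}. if [L (g x) = e] (mod n) then of_nat n else 0) = (of_nat (p - 1) :: complex)"
proof -
  let ?X = "{x \<in> {2..<p}. [L (g x) = e] (mod n)}"
  have inj: "inj_on g ?X" using bij_betw_imp_inj_on[OF g] by (rule inj_on_subset) blast
  have "g ` ?X = {y \<in> g ` {2..<p}. [L y = e] (mod n)}" by blast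
  also have "g ` {2..<p} = {1..<p} - {y0}" using bij_betw_imp_surj_on[OF g] .
  also have "{y \<in> {1..<p} - {y0}. [L y = e] (mod n)} = {y \<in> {1..<p}. [L y = e] (mod n)}" using y0 by blast
  finally have "card ?X = card {y \<in> {1..<p}. [L y = e] (mod n)}" using card_image[OF inj] by simp
  also have "\<dots> = (p - 1) div n" by (rule card_L_class)
  finally have card_X: "card ?X = (p - 1) div n" .
  have "(\<Sum>x\<in>{2..<p}. if [L (g x) = e] (mod n) then of_nat n else 0) = (\<Sum>x\<in>?X. of_nat n :: complex)"
    by (rule sum.inter_filter[symmetric]) simp
  also have "\<dots> = of_nat (card ?X) * of_nat n" by (rule sum_constant)
  also have "\<dots> = of_nat (p - 1)" unfolding card_X using n_dvd_p_minus_1 by (metis dvd_div_mult_self of_nat_mult)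
  finally show ?thesis .
qed

lemma L_1_not_cong: assumes "c \<in> cyc q a" "c \<noteq> 1" shows "\<not> [L 1 = d c] (mod n)"
  using pow_eq_cyc_iff[OF assms(1), of 0] assms(2) q_gt_1 L_1 by simp

lemma sum_cJ_row_0: "(\<Sum>j<n. cJ 0 j) = of_nat (card (Bset q a) * (p - 1))"
proof -
  have "(\<Sum>j<n. cJ 0 j) = (\<Sum>j<n. \<Sum>x\<in>{2..<p}. \<Sum>b\<in>Bset q a. chi_psi (p + 1 - x) (q + 1 - b) ^ j)"
    by (simp add: cJ_expand)
  also have "\<dots> = (\<Sum>x\<in>{2..<p}. \<Sum>b\<in>Bset q a. \<Sum>j<n. chi_psi (p + 1 - x) (q + 1 - b) ^ j)"
    by (rule sum_swap_3)
  also have "\<dots> = (\<Sum>b\<in>Bset q a. \<Sum>x\<in>{2..<p}. if [L (p + 1 - x) = d (q + 1 - b)] (mod n) then of_nat n else 0)"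
    by (subst sum.swap) (simp only: sum_powers_chi_psi)
  also have "\<dots> = (\<Sum>b\<in>Bset q a. of_nat (p - 1))"
  proof (rule sum.cong[OF refl])
    fix b assume b: "b \<in> Bset q a"
    have "bij_betw (\<lambda>x. p + 1 - x) {2..<p} ({1..<p} - {1})"
      by (rule bij_betwI[where g = "\<lambda>x. p + 1 - x"]) auto
    moreover have "\<not> [L 1 = d (q + 1 - b)] (mod n)"
      using Bset_reflect(1)[OF b] by (intro L_1_not_cong) (auto simp: Bset_iff)
    ultimately show "(\<Sum>x\<in>{2..<p}. if [L (p + 1 - x) = d (q + 1 - b)] (mod n) then of_nat n else 0) =
        (of_nat (p - 1) :: complex)"
      by (rule sum_L_class_punctured)
  qed
  finally show ?thesis by simp
qed

lemma sum_cJ_column_0: "(\<Sum>i<n. cJ i 0) = of_nat (card (Bset q a) * (p - 1))"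
proof -
  have "(\<Sum>i<n. cJ i 0) = (\<Sum>i<n. \<Sum>x\<in>{2..<p}. \<Sum>b\<in>Bset q a. chi_psi x b ^ i)"
    by (simp add: cJ_expand)
  also have "\<dots> = (\<Sum>x\<in>{2..<p}. \<Sum>b\<in>Bset q a. \<Sum>i<n. chi_psi x b ^ i)"
    by (rule sum_swap_3)
  also have "\<dots> = (\<Sum>b\<in>Bset q a. \<Sum>x\<in>{2..<p}. if [L x = d b] (mod n) then of_nat n else 0)"
    by (subst sum.swap) (simp only: sum_powers_chi_psi)
  also have "\<dots> = (\<Sum>b\<in>Bset q a. of_nat (p - 1))"
  proof (rule sum.cong[OF refl])
    fix b assume b: "b \<in> Bset q a"
    have "bij_betw (\<lambda>x. x) {2..<p} ({1..<p} - {1})" by (rule bij_betwI[where g = "\<lambda>x. x"]) auto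
    moreover have "\<not> [L 1 = d b] (mod n)" using b by (intro L_1_not_cong) (auto simp: Bset_iff)
    ultimately show "(\<Sum>x\<in>{2..<p}. if [L x = d b] (mod n) then of_nat n else 0) = (of_nat (p - 1) :: complex)"
      by (rule sum_L_class_punctured[of "\<lambda>x. x"])
  qed
  finally show ?thesis by simp
qed

text \<open>\<open>ratio x\<close> is \<open>x / (1 - x)\<close> in \<open>\<FF>\<^sub>p\<close>.\<close>

definition ratio :: "nat \<Rightarrow> nat" where
  "ratio x = a ^ (L x + (p - 1) - L (p + 1 - x)) mod p"

lemma L_ratio:
  assumes "x \<in> {2..<p}"
  shows "[L (ratio x) + L (p + 1 - x) = L x] (mod n)"
proof -
  have "p + 1 - x \<in> {1..<p}" using assms by auto
  hence y: "L (p + 1 - x) < p - 1" by (rule pow_L(2))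
  have "[L (ratio x) + L (p + 1 - x) = L x + (p - 1)] (mod (p - 1))"
    unfolding ratio_def L_pow using y by (simp add: cong_def mod_add_left_eq)
  hence "[L (ratio x) + L (p + 1 - x) = L x + (p - 1)] (mod n)"
    using n_dvd_p_minus_1 by (rule cong_dvd_modulus_nat)
  moreover have "[L x + (p - 1) = L x] (mod n)"
    using n_dvd_p_minus_1 by (simp add: cong_add_lcancel_0_nat cong_0_iff)
  ultimately show ?thesis by (rule cong_trans)
qed

lemma ratio_cong:
  assumes "x \<in> {2..<p}"
  shows "[int (ratio x) * (int p + 1 - int x) = int x] (mod int p)"
proof -
  let ?y = "p + 1 - x"
  have y: "?y \<in> {1..<p}" using assms by auto
  hence Ly: "L ?y < p - 1" by (rule pow_L(2))
  have "[ratio x * ?y = a ^ (L x + (p - 1) - L ?y) * a ^ L ?y] (mod p)"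
    unfolding ratio_def using pow_L(1)[OF y] y by (intro cong_mult) (auto simp: cong_def)
  also have "a ^ (L x + (p - 1) - L ?y) * a ^ L ?y = a ^ L x * a ^ (p - 1)"
    using Ly by (simp add: power_add[symmetric])
  also have "[a ^ L x * a ^ (p - 1) = x * 1] (mod p)"
    using pow_L(1)[of x] assms ord[of a p] ord_p by (intro cong_mult) (auto simp: cong_def)
  finally have "[int (ratio x * ?y) = int x] (mod int p)" by (simp only: cong_int_iff mult_1_right)
  thus ?thesis using assms by (simp add: of_nat_diff add.commute)
qed

lemma ratio_mem:
  assumes x: "x \<in> {2..<p}"
  shows "ratio x \<in> {1..<p} - {p - 1}"
proof -
  have "ratio x \<noteq> 0" using not_p_dvd_pow unfolding ratio_def by (auto simp: cong_def)
  moreover have "ratio x \<noteq> p - 1"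
  proof
    assume "ratio x = p - 1"
    hence "[(int p - 1) * (int p + 1 - int x) = int x] (mod int p)"
      using ratio_cong[OF x] p_gt_2 by (simp add: of_nat_diff)
    hence "int p dvd int x - (int p - 1) * (int p + 1 - int x)"
      by (simp add: cong_iff_dvd_diff dvd_diff_commute)
    moreover have "int x - (int p - 1) * (int p + 1 - int x) = int p * (int x - int p) + 1"
      by (simp add: algebra_simps)
    ultimately have "int p dvd 1" by (metis dvd_add_right_iff dvd_triv_left)
    thus False using p_gt_2 by simp
  qed
  moreover have "ratio x < p" unfolding ratio_def using p_gt_2 by simp
  ultimately show ?thesis by auto
qed

lemma inj_on_ratio: "inj_on ratio {2..<p}"
proof (rule inj_onI)
  fix x x' assume x: "x \<in> {2..<p}" and x': "x' \<in> {2..<p}" and eq: "ratio x = ratio x'"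
  define t where "t = int (ratio x)"
  have "int p dvd int x - t * (int p + 1 - int x)" "int p dvd int x' - t * (int p + 1 - int x')"
    using ratio_cong[OF x] ratio_cong[OF x'] eq unfolding t_def
    by (simp_all add: cong_iff_dvd_diff dvd_diff_commute)
  hence "int p dvd (int p + 1 - int x') * (int x - t * (int p + 1 - int x))
      - (int p + 1 - int x) * (int x' - t * (int p + 1 - int x'))"
    by (blast intro: dvd_diff dvd_mult)
  moreover have "(int p + 1 - int x') * (int x - t * (int p + 1 - int x))
      - (int p + 1 - int x) * (int x' - t * (int p + 1 - int x')) = int p * (int x - int x') + (int x - int x')"
    by (simp add: algebra_simps)
  ultimately have "int p dvd int x - int x'" by (metis dvd_add_right_iff dvd_triv_left)
  hence "[x = x'] (mod p)" by (simp add: cong_iff_dvd_diff cong_int_iff[symmetric])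
  thus "x = x'" using x x' cong_less_modulus_unique_nat by auto
qed

lemma ratio_bij: "bij_betw ratio {2..<p} ({1..<p} - {p - 1})"
proof -
  have "card (ratio ` {2..<p}) = card ({1..<p} - {p - 1})"
    using card_image[OF inj_on_ratio] p_gt_2 by simp
  hence "ratio ` {2..<p} = {1..<p} - {p - 1}" using ratio_mem by (intro card_subset_eq) auto
  thus ?thesis using inj_on_ratio by (simp add: bij_betw_def)
qed

lemma antidiagonal_cong_iff:
  assumes x: "x \<in> {2..<p}" and b: "b \<in> Bset q a"
  shows "[L x + d (q + 1 - b) = L (p + 1 - x) + d b] (mod n) \<longleftrightarrow>
    [L (ratio x) = d b + n - d (q + 1 - b)] (mod n)"
proof -
  let ?A = "int (L x)" and ?Y = "int (L (p + 1 - x))" and ?R = "int (L (ratio x))"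
  let ?B = "int (d b)" and ?B' = "int (d (q + 1 - b))"
  have "d (q + 1 - b) < n" using Bset_reflect(1)[OF b] by (intro cyc_elem(2)) (simp add: Bset_iff)
  hence eq: "?A + ?B' - (?Y + ?B) = (?R - int (d b + n - d (q + 1 - b))) + (int n - (?R + ?Y - ?A))"
    by (simp add: of_nat_diff)
  have "int n dvd ?R + ?Y - ?A"
    using L_ratio[OF x] by (simp add: cong_int_iff[symmetric] cong_iff_dvd_diff)
  hence "int n dvd int n - (?R + ?Y - ?A)" by simp
  hence "int n dvd ?A + ?B' - (?Y + ?B) \<longleftrightarrow> int n dvd ?R - int (d b + n - d (q + 1 - b))"
    unfolding eq by (rule dvd_add_left_iff)
  thus ?thesis by (simp add: cong_int_iff[symmetric] cong_iff_dvd_diff)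
qed

lemma L_minus_1_not_cong:
  assumes b: "b \<in> Bset q a"
  shows "\<not> [L (p - 1) = d b + n - d (q + 1 - b)] (mod n)"
proof
  let ?b' = "q + 1 - b"
  have cyc: "b \<in> cyc q a" "?b' \<in> cyc q a" using b Bset_reflect(1)[OF b] by (simp_all add: Bset_iff)
  assume "[L (p - 1) = d b + n - d ?b'] (mod n)"
  hence "[h + d ?b' = d b + n - d ?b' + d ?b'] (mod n)" unfolding L_minus_1 by (rule cong_add) simp
  also have "d b + n - d ?b' + d ?b' = d b + n" using cyc_elem(2)[OF cyc(2)] by simp
  also have "[d b + n = d b] (mod n)" by (simp add: cong_def)
  finally have "a ^ (h + d ?b') mod q = b" using pow_eq_cyc_iff[OF cyc(1)] by simp
  moreover have "[a ^ (h + d ?b') + a ^ d ?b' = 0] (mod q)" by (rule pow_half_add_cong) simp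
  hence "(a ^ (h + d ?b') mod q + a ^ d ?b' mod q) mod q = 0" by (simp add: cong_def mod_add_eq)
  ultimately have "(b + ?b') mod q = 0" using cyc_elem(1)[OF cyc(2)] by simp
  moreover have "b + ?b' = q + 1" using Bset_reflect(2)[OF b] by simp
  ultimately show False using q_gt_1 by (simp add: mod_Suc)
qed

lemma sum_cJ_antidiagonal: "(\<Sum>i<n. cJ i ((n - i) mod n)) = of_nat (card (Bset q a) * (p - 1))"
proof -
  let ?T = "\<lambda>i x b. (w ^ (L x + d (q + 1 - b)) * inverse (w ^ (L (p + 1 - x) + d b))) ^ i"
  have "(\<Sum>i<n. cJ i ((n - i) mod n)) = (\<Sum>i<n. \<Sum>x\<in>{2..<p}. \<Sum>b\<in>Bset q a. ?T i x b)"
  proof (rule sum.cong[OF refl])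
    fix i assume "i \<in> {..<n}"
    have "chi_psi x b ^ i * chi_psi (p + 1 - x) (q + 1 - b) ^ ((n - i) mod n) = ?T i x b" for x b
    proof -
      have "chi_psi x b ^ i * chi_psi (p + 1 - x) (q + 1 - b) ^ ((n - i) mod n) =
          (chi_psi x b * inverse (chi_psi (p + 1 - x) (q + 1 - b))) ^ i"
        using \<open>i \<in> {..<n}\<close>
        by (simp add: root_of_unity_pow_mod_diff[OF chi_psi_pow_n] power_mult_distrib power_inverse)
      also have "chi_psi x b * inverse (chi_psi (p + 1 - x) (q + 1 - b)) =
          w ^ (L x + d (q + 1 - b)) * inverse (w ^ (L (p + 1 - x) + d b))"
        by (simp add: chi_psi_eq power_add field_simps)
      finally show ?thesis .
    qed
    thus "cJ i ((n - i) mod n) = (\<Sum>x\<in>{2..<p}. \<Sum>b\<in>Bset q a. ?T i x b)"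
      unfolding cJ_expand by simp
  qed
  also have "\<dots> = (\<Sum>x\<in>{2..<p}. \<Sum>b\<in>Bset q a. \<Sum>i<n. ?T i x b)" by (rule sum_swap_3)
  also have "\<dots> = (\<Sum>b\<in>Bset q a. \<Sum>x\<in>{2..<p}.
      if [L x + d (q + 1 - b) = L (p + 1 - x) + d b] (mod n) then of_nat n else 0)"
    by (subst sum.swap) (simp only: sum_powers_w)
  also have "\<dots> = (\<Sum>b\<in>Bset q a. of_nat (p - 1))"
  proof (rule sum.cong[OF refl])
    fix b assume b: "b \<in> Bset q a"
    have "(\<Sum>x\<in>{2..<p}. if [L x + d (q + 1 - b) = L (p + 1 - x) + d b] (mod n) then of_nat n else 0) =
        (\<Sum>x\<in>{2..<p}. if [L (ratio x) = d b + n - d (q + 1 - b)] (mod n) then of_nat n else (0 :: complex))"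
      using antidiagonal_cong_iff[OF _ b] by (intro sum.cong refl) simp
    also have "\<dots> = of_nat (p - 1)"
      using ratio_bij L_minus_1_not_cong[OF b] by (rule sum_L_class_punctured)
    finally show "(\<Sum>x\<in>{2..<p}. if [L x + d (q + 1 - b) = L (p + 1 - x) + d b] (mod n) then of_nat n else 0) =
        (of_nat (p - 1) :: complex)" .
  qed
  finally show ?thesis by simp
qed

section \<open>Symmetries and the final count\<close>

lemma sum_reflect:
  "(\<Sum>x\<in>{2..<p}. \<Sum>b\<in>Bset q a. f (p + 1 - x) (q + 1 - b)) = (\<Sum>x\<in>{2..<p}. \<Sum>b\<in>Bset q a. f x b)"
proof -
  have "bij_betw (\<lambda>b. q + 1 - b) (Bset q a) (Bset q a)"
  proof (rule bij_betwI[where g = "\<lambda>b. q + 1 - b"])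
    show "(\<lambda>b. q + 1 - b) \<in> Bset q a \<rightarrow> Bset q a" by (rule funcsetI) (rule Bset_reflect(1))
    thus "(\<lambda>b. q + 1 - b) \<in> Bset q a \<rightarrow> Bset q a" .
    show "q + 1 - (q + 1 - b) = b" if "b \<in> Bset q a" for b using Bset_reflect(2)[OF that] by simp
    show "q + 1 - (q + 1 - b) = b" if "b \<in> Bset q a" for b using Bset_reflect(2)[OF that] by simp
  qed
  hence "(\<Sum>b\<in>Bset q a. f y (q + 1 - b)) = (\<Sum>b\<in>Bset q a. f y b)" for y
    by (rule sum.reindex_bij_betw)
  hence "(\<Sum>x\<in>{2..<p}. \<Sum>b\<in>Bset q a. f (p + 1 - x) (q + 1 - b)) =
      (\<Sum>x\<in>{2..<p}. \<Sum>b\<in>Bset q a. f (p + 1 - x) b)" by simp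
  also have "bij_betw (\<lambda>x. p + 1 - x) {2..<p} {2..<p}"
    by (rule bij_betwI[where g = "\<lambda>x. p + 1 - x"]) auto
  hence "(\<Sum>x\<in>{2..<p}. \<Sum>b\<in>Bset q a. f (p + 1 - x) b) = (\<Sum>x\<in>{2..<p}. \<Sum>b\<in>Bset q a. f x b)"
    by (rule sum.reindex_bij_betw)
  finally show ?thesis .
qed

lemma cJ_swap: "cJ j i = cJ i j"
proof -
  have "cJ j i = (\<Sum>x\<in>{2..<p}. \<Sum>b\<in>Bset q a.
      chi_psi (p + 1 - x) (q + 1 - b) ^ j * chi_psi (p + 1 - (p + 1 - x)) (q + 1 - (q + 1 - b)) ^ i)"
    unfolding cJ_expand by (rule sum_reflect[symmetric])
  also have "\<dots> = cJ i j"
    unfolding cJ_expand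
  proof (intro sum.cong refl)
    fix x b assume "x \<in> {2..<p}" "b \<in> Bset q a"
    hence "p + 1 - (p + 1 - x) = x" "q + 1 - (q + 1 - b) = b" using Bset_reflect(2)[of b] by auto
    thus "chi_psi (p + 1 - x) (q + 1 - b) ^ j * chi_psi (p + 1 - (p + 1 - x)) (q + 1 - (q + 1 - b)) ^ i =
        chi_psi x b ^ i * chi_psi (p + 1 - x) (q + 1 - b) ^ j" by (simp only: mult.commute)
  qed
  finally show ?thesis .
qed

lemma cJ_conj: "i \<le> n \<Longrightarrow> j \<le> n \<Longrightarrow> cJ (n - i) (n - j) = cnj (cJ i j)"
  unfolding cJ_expand by (simp add: root_of_unity_pow_diff[OF chi_psi_pow_n] cnj_sum)

lemma cJ_0_0: "cJ 0 0 = of_nat (card (Bset q a) * (p - 2))"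
  unfolding cJ_expand by (simp add: mult.commute)

lemma sum_cJ_triangle:
  "(\<Sum>(i, j)\<in>triangle n. cJ i j) + (\<Sum>(i, j)\<in>triangle n. cJ (n - i) (n - j)) =
    of_real (\<Sum>i\<in>{1..<n}. \<Sum>j\<in>{i..<n - i}. 2 * (2 - (if i = j then 1 else 0)) * Re (cJ i j))"
proof -
  have conj: "(\<Sum>(i, j)\<in>triangle n. cJ (n - i) (n - j)) = (\<Sum>(i, j)\<in>triangle n. cnj (cJ i j))"
    by (intro sum.cong refl) (auto simp: triangle_def cJ_conj)
  have "(\<Sum>(i, j)\<in>triangle n. cJ i j) + (\<Sum>(i, j)\<in>triangle n. cJ (n - i) (n - j)) =
      (\<Sum>(i, j)\<in>triangle n. of_real (2 * Re (cJ i j)))"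
    unfolding conj sum.distrib[symmetric] by (intro sum.cong refl) (simp only: split_def complex_add_cnj)
  also have "\<dots> = of_real (\<Sum>(i, j)\<in>triangle n. 2 * Re (cJ i j))"
    by (simp add: split_def)
  also have "(\<Sum>(i, j)\<in>triangle n. 2 * Re (cJ i j)) =
      (\<Sum>i\<in>{1..<n}. \<Sum>j\<in>{i..<n - i}. (2 - (if i = j then 1 else 0)) * (2 * Re (cJ i j)))"
    by (rule sum_triangle_fold) (simp add: cJ_swap)
  also have "\<dots> = (\<Sum>i\<in>{1..<n}. \<Sum>j\<in>{i..<n - i}. 2 * (2 - (if i = j then 1 else 0)) * Re (cJ i j))"
    by (simp only: mult.left_commute mult.assoc)
  finally show ?thesis .
qed

lemma sum_cJ_square:
  "(\<Sum>i<n. \<Sum>j<n. cJ i j) = of_real (real (p + 1) * real (card (Bset q a)) +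
    (\<Sum>i\<in>{1..<n}. \<Sum>j\<in>{i..<n - i}. 2 * (2 - (if i = j then 1 else 0)) * Re (cJ i j)))"
proof -
  let ?N = "of_nat (card (Bset q a) * (p - 1)) :: complex"
  have lessThan_n: "{..<n} = insert 0 {1..<n}" using n_pos by auto
  have column: "(\<Sum>i\<in>{1..<n}. cJ i 0) = ?N - cJ 0 0"
    using sum_cJ_column_0 unfolding lessThan_n by (simp add: eq_diff_eq add.commute)
  have "(\<Sum>i\<in>{1..<n}. cJ i (n - i)) = (\<Sum>i\<in>{1..<n}. cJ i ((n - i) mod n))"
    by (intro sum.cong refl) auto
  hence antidiagonal: "(\<Sum>i\<in>{1..<n}. cJ i (n - i)) = ?N - cJ 0 0"
    using sum_cJ_antidiagonal unfolding lessThan_n by (simp add: eq_diff_eq add.commute)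
  have "p = (p - 3) + 3" using p_gt_2 by simp
  hence "card (Bset q a) * (p - 1) * 3 = card (Bset q a) * (p + 1) + 2 * (card (Bset q a) * (p - 2))"
    by (simp add: algebra_simps)
  hence "of_nat (card (Bset q a) * (p - 1) * 3) =
      (of_nat (card (Bset q a) * (p + 1) + 2 * (card (Bset q a) * (p - 2))) :: complex)" by (rule arg_cong)
  hence "?N * 3 = of_nat (card (Bset q a) * (p + 1)) + 2 * cJ 0 0"
    unfolding cJ_0_0 by (simp only: of_nat_mult of_nat_add of_nat_numeral)
  hence "?N + (?N - cJ 0 0) + (?N - cJ 0 0) = of_real (real (p + 1) * real (card (Bset q a)))"
    by (simp add: algebra_simps)
  moreover have "(\<Sum>i<n. \<Sum>j<n. cJ i j) = ?N + (?N - cJ 0 0) + (?N - cJ 0 0) +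
      ((\<Sum>(i, j)\<in>triangle n. cJ i j) + (\<Sum>(i, j)\<in>triangle n. cJ (n - i) (n - j)))"
    unfolding sum_square_split[of cJ n] sum_cJ_row_0 column antidiagonal by (rule add.assoc)
  ultimately show ?thesis unfolding sum_cJ_triangle by simp
qed

theorem card_S_inter_shift1_formula:
  "real (card (S_set (p * q) p a \<inter> shift1 (p * q) (S_set (p * q) p a))) =
    (1 / real n ^ 2) *
      (real (p + 1) * real (card (Bset q a)) +
       (\<Sum>i\<in>{1..<n}. \<Sum>j\<in>{i..<n - i}.
          2 * (2 - (if i = j then 1 else 0)) *
          Re (c_coef q a n i j * jacobi p (chi_pow p a n i) (chi_pow p a n j))))"
proof -
  let ?X = "real (p + 1) * real (card (Bset q a)) +
    (\<Sum>i\<in>{1..<n}. \<Sum>j\<in>{i..<n - i}.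
       2 * (2 - (if i = j then 1 else 0)) * Re (c_coef q a n i j * jacobi p (chi_pow p a n i) (chi_pow p a n j)))"
  have "(\<Sum>i\<in>{1..<n}. \<Sum>j\<in>{i..<n - i}. 2 * (2 - (if i = j then 1 else 0)) * Re (cJ i j)) =
      (\<Sum>i\<in>{1..<n}. \<Sum>j\<in>{i..<n - i}.
         2 * (2 - (if i = j then 1 else 0)) * Re (c_coef q a n i j * jacobi p (chi_pow p a n i) (chi_pow p a n j)))"
  proof (intro sum.cong refl)
    fix i j assume "i \<in> {1..<n}" "j \<in> {i..<n - i}"
    hence "jacobi p (chi_pow p a n i) (chi_pow p a n j) = jacobi_inner i j"
      by (intro jacobi_eq_jacobi_inner) auto
    thus "2 * (2 - (if i = j then 1 else 0)) * Re (cJ i j) =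
        2 * (2 - (if i = j then 1 else 0)) * Re (c_coef q a n i j * jacobi p (chi_pow p a n i) (chi_pow p a n j))"
      by simp
  qed
  hence "complex_of_real (real n ^ 2 * real (card pair_set)) = complex_of_real ?X"
    using card_pair_set_fourier sum_cJ_square by simp
  hence "real n ^ 2 * real (card pair_set) = ?X" by (simp only: of_real_eq_iff)
  thus ?thesis using n_pos card_S_inter_shift1 by (simp add: field_simps)
qed

end

theorem mainTheorem9:
  fixes p q a n :: nat
  assumes "odd q" and "q > 1"
    and "prime p" and "p > q"
    and "coprime a (p * q)"
    and "[a ^ ((p - 1) div 2) = p * q - 1] (mod (p * q))"
    and "residue_primroot p a"
    and "n = ord q a"
  shows "real (card (S_set (p * q) p a \<inter> shift1 (p * q) (S_set (p * q) p a))) =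
    (1 / real n ^ 2) *
      (real (p + 1) * real (card (Bset q a)) +
       (\<Sum>i\<in>{1..<n}. \<Sum>j\<in>{i..<n - i}.
          2 * (2 - (if i = j then 1 else 0)) *
          Re (c_coef q a n i j * jacobi p (chi_pow p a n i) (chi_pow p a n j))))"
proof -
  interpret pq_setting p q a n using assms by unfold_locales
  show ?thesis by (rule card_S_inter_shift1_formula)
qed

end
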